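(* Let $F:\mathbb{R}^p\to\mathbb{R}$ be bounded from below by a constant $F_{l.b.}$, and suppose that $\dot F(x)=\nabla F(x)$ exists for every $x\in\mathbb{R}^p$ and is locally Lipschitz continuous. Let $x_0\in\mathbb{R}^p$, let $\{M_k:k\ge0\}\subset\mathbb{R}^{p\times p}$ be symmetric positive definite matrices with $\lim_{k\to\infty}\lambda_{\max}(M_k)=0$, and define $x_{k+1}=x_k-M_k\dot F(x_k)$ for $k\ge0$. Let $R\ge 0$. Then there exists $K\in\mathbb{N}$ such that for all $k\ge K$, $$[F(x_{k+1})-F_{l.b.}]\,\chi_{k+1}^0(R)\le\Big[F(x_k)-F_{l.b.}-\tfrac12\lambda_{\min}(M_k)\|\dot F(x_k)\|_2^2\Big]\chi_k^0(R).$$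
   Context: $\lambda_{\min}(M)$ and $\lambda_{\max}(M)$ denote the smallest and largest eigenvalues of a symmetric matrix $M$. For $R\ge 0$ and $k\ge0$, $\chi_k^0(R)$ equals $1$ if $\|x_j\|_2\le R$ for all $0\le j\le k$, and $0$ otherwise. *)

theory Defs
  imports "HOL-Analysis.Analysis"
begin

definition mat_eigenvalues :: "real^'n^'n \<Rightarrow> real set" where
  "mat_eigenvalues M = {l. \<exists>v. v \<noteq> 0 \<and> M *v v = l *\<^sub>R v}"

definition lambda_min :: "real^'n^'n \<Rightarrow> real" where
  "lambda_min M = Min (mat_eigenvalues M)"

definition lambda_max :: "real^'n^'n \<Rightarrow> real" where
  "lambda_max M = Max (mat_eigenvalues M)"

definition symmetric_mat :: "real^'n^'n \<Rightarrow> bool" where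
  "symmetric_mat M \<longleftrightarrow> transpose M = M"

definition pos_def_mat :: "real^'n^'n \<Rightarrow> bool" where
  "pos_def_mat M \<longleftrightarrow> (\<forall>v. v \<noteq> 0 \<longrightarrow> v \<bullet> (M *v v) > 0)"

definition locally_lipschitz :: "('a::metric_space \<Rightarrow> 'b::metric_space) \<Rightarrow> bool" where
  "locally_lipschitz g \<longleftrightarrow> (\<forall>x. \<exists>e>0. \<exists>L. L-lipschitz_on (ball x e) g)"

definition chi0 :: "(nat \<Rightarrow> 'a::real_normed_vector) \<Rightarrow> nat \<Rightarrow> real \<Rightarrow> real" where
  "chi0 x k R = (if \<forall>j\<le>k. norm (x j) \<le> R then 1 else 0)"

end

theory Submission
  imports Defs
begin

text \<open>
  For fixed \<open>R\<close> the gradient is bounded on the ball of radius \<open>R\<close> and Lipschitz, with some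
  constant \<open>L\<close>, on the ball of radius \<open>R + 1\<close>. Once \<open>lambda_max (M k)\<close> is small, a gradient
  step from a point of the smaller ball moves by at most \<open>1\<close>, so along the step the descent
  inequality \<open>F (y - d) \<le> F y - \<nabla>F y \<bullet> d + L \<parallel>d\<parallel>\<^sup>2\<close> holds. For \<open>d = M g\<close> the spectral bound
  \<open>\<parallel>M g\<parallel>\<^sup>2 \<le> lambda_max M (g \<bullet> M g)\<close> absorbs the quadratic term, leaving
  \<open>F (x (k+1)) \<le> F (x k) - 1/2 (g \<bullet> M g) \<le> F (x k) - 1/2 lambda_min M \<parallel>g\<parallel>\<^sup>2\<close>
  whenever \<open>\<parallel>x k\<parallel> \<le> R\<close>. The indicators then only need \<open>\<chi>\<^sub>k\<^sub>+\<^sub>1 \<le> \<chi>\<^sub>k\<close> and \<open>F \<ge> Flb\<close>.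
\<close>

lemma self_adjoint_psd_Cauchy_Schwarz:
  fixes f :: "'a::real_inner \<Rightarrow> 'a"
  assumes lin: "linear f" and adj: "\<And>u v. u \<bullet> f v = f u \<bullet> v"
    and psd: "\<And>v. 0 \<le> v \<bullet> f v"
  shows "(u \<bullet> f v)\<^sup>2 \<le> (u \<bullet> f u) * (v \<bullet> f v)"
proof -
  define a b c where "a = u \<bullet> f u" and "b = u \<bullet> f v" and "c = v \<bullet> f v"
  have quadratic_nonneg: "0 \<le> a + 2*t*b + t\<^sup>2*c" for t
  proof -
    have "(u + t *\<^sub>R v) \<bullet> f (u + t *\<^sub>R v) = a + 2*t*b + t\<^sup>2*c"
      using adj[of v u] inner_commute[of "f v" u] unfolding a_def b_def c_def
      by (simp add: linear_add[OF lin] linear_scale[OF lin] inner_add_left inner_add_right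
          power2_eq_square algebra_simps)
    then show ?thesis using psd[of "u + t *\<^sub>R v"] by simp
  qed
  have "c \<ge> 0" unfolding c_def by (rule psd)
  show ?thesis
  proof (cases "c = 0")
    case True
    have "b = 0"
    proof (rule ccontr)
      assume "b \<noteq> 0"
      have "0 \<le> a + 2*(-(a+1)/(2*b))*b" using quadratic_nonneg[of "-(a+1)/(2*b)"] True by simp
      also have "\<dots> = -1" using \<open>b \<noteq> 0\<close> by (simp add: field_simps)
      finally show False by simp
    qed
    then show ?thesis using True unfolding a_def b_def c_def by simp
  next
    case False
    then have "c > 0" using \<open>c \<ge> 0\<close> by simp
    have "0 \<le> a + 2*(-b/c)*b + (-b/c)\<^sup>2*c" by (rule quadratic_nonneg)
    also have "\<dots> = a - b\<^sup>2/c" using \<open>c > 0\<close> by (simp add: field_simps power2_eq_square)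
    finally have "b\<^sup>2 \<le> a * c" using \<open>c > 0\<close> by (simp add: field_simps)
    then show ?thesis unfolding a_def b_def c_def .
  qed
qed

text \<open>The maximiser of the quadratic form on the unit sphere is an eigenvector: for
  \<open>g = \<mu> id - f\<close> it satisfies \<open>u\<cdot>g u = 0\<close>, and Cauchy-Schwarz for the positive
  semidefinite \<open>g\<close> then forces \<open>g u = 0\<close>.\<close>

lemma self_adjoint_max_eigenvector:
  fixes f :: "'a::euclidean_space \<Rightarrow> 'a"
  assumes lin: "linear f" and adj: "\<And>u v. u \<bullet> f v = f u \<bullet> v"
  obtains \<mu> u where "u \<noteq> 0" "f u = \<mu> *\<^sub>R u" "\<And>v. v \<bullet> f v \<le> \<mu> * (norm v)\<^sup>2"
proof -
  have "bounded_linear f" using lin linear_conv_bounded_linear by auto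
  then have "continuous_on (sphere 0 1) (\<lambda>v. v \<bullet> f v)"
    by (intro continuous_intros linear_continuous_on)
  moreover obtain b :: 'a where "b \<in> Basis" using nonempty_Basis by blast
  then have "sphere (0::'a) 1 \<noteq> {}" by (auto simp: norm_Basis)
  ultimately obtain u where u: "u \<in> sphere 0 1"
    and u_max: "\<And>v. v \<in> sphere 0 1 \<Longrightarrow> v \<bullet> f v \<le> u \<bullet> f u"
    using continuous_attains_sup[OF compact_sphere] by blast
  define \<mu> where "\<mu> = u \<bullet> f u"
  have form_le: "v \<bullet> f v \<le> \<mu> * (norm v)\<^sup>2" for v
  proof (cases "v = 0")
    case True then show ?thesis using linear_0[OF lin] by simp
  next
    case False
    define w where "w = (1 / norm v) *\<^sub>R v"
    have "w \<in> sphere 0 1" using False unfolding w_def by simp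
    then have "w \<bullet> f w \<le> \<mu>" using u_max unfolding \<mu>_def by blast
    moreover have "w \<bullet> f w = (v \<bullet> f v) / (norm v)\<^sup>2"
      unfolding w_def by (simp add: linear_scale[OF lin] power2_eq_square)
    ultimately show ?thesis using False by (simp add: field_simps)
  qed
  define g where "g w = \<mu> *\<^sub>R w - f w" for w
  have "linear g"
    unfolding g_def
    by (rule linearI) (simp_all add: linear_add[OF lin] linear_scale[OF lin] algebra_simps)
  moreover have "\<And>v w. v \<bullet> g w = g v \<bullet> w"
    unfolding g_def using adj by (simp add: inner_diff_left inner_diff_right inner_commute)
  moreover have "\<And>v. 0 \<le> v \<bullet> g v"
    unfolding g_def using form_le by (simp add: inner_diff_right power2_norm_eq_inner)
  ultimately have "(g u \<bullet> g u)\<^sup>2 \<le> (g u \<bullet> g (g u)) * (u \<bullet> g u)"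
    by (rule self_adjoint_psd_Cauchy_Schwarz)
  moreover have "u \<bullet> g u = 0"
    unfolding g_def \<mu>_def using u by (simp add: inner_diff_right power2_norm_eq_inner[symmetric])
  ultimately have "g u = 0" by simp
  then have "f u = \<mu> *\<^sub>R u" unfolding g_def by simp
  moreover have "u \<noteq> 0" using u by auto
  ultimately show ?thesis using form_le that by blast
qed

lemma self_adjoint_norm_le:
  fixes f :: "'a::real_inner \<Rightarrow> 'a"
  assumes lin: "linear f" and adj: "\<And>u v. u \<bullet> f v = f u \<bullet> v"
    and psd: "\<And>v. 0 \<le> v \<bullet> f v" and form_le: "\<And>v. v \<bullet> f v \<le> \<mu> * (norm v)\<^sup>2"
    and "0 \<le> \<mu>"
  shows "(norm (f v))\<^sup>2 \<le> \<mu> * (v \<bullet> f v)" and "norm (f v) \<le> \<mu> * norm v"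
proof -
  let ?n = "(norm (f v))\<^sup>2"
  have "?n\<^sup>2 \<le> (f v \<bullet> f (f v)) * (v \<bullet> f v)"
    using self_adjoint_psd_Cauchy_Schwarz[OF lin adj psd, of "f v" v]
    by (simp add: power2_norm_eq_inner)
  also have "\<dots> \<le> (\<mu> * ?n) * (v \<bullet> f v)"
    using form_le psd by (rule mult_right_mono)
  finally have sq_le: "?n * ?n \<le> ?n * (\<mu> * (v \<bullet> f v))"
    by (simp add: power2_eq_square algebra_simps)
  show "?n \<le> \<mu> * (v \<bullet> f v)"
  proof (cases "f v = 0")
    case False
    then have "0 < ?n" by simp
    then show ?thesis using sq_le mult_le_cancel_left_pos by blast
  qed (use psd \<open>0 \<le> \<mu>\<close> in simp)
  also have "\<dots> \<le> \<mu> * (norm v * norm (f v))"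
    using norm_cauchy_schwarz \<open>0 \<le> \<mu>\<close> by (rule mult_left_mono)
  finally show "norm (f v) \<le> \<mu> * norm v"
    using \<open>0 \<le> \<mu>\<close> by (cases "f v = 0") (auto simp: power2_eq_square)
qed

lemma symmetric_mat_inner:
  assumes "symmetric_mat M"
  shows "u \<bullet> (M *v v) = (M *v u) \<bullet> v"
  using assms unfolding symmetric_mat_def
  by (metis dot_lmul_matrix transpose_matrix_vector)

text \<open>Eigenvectors of distinct eigenvalues are orthogonal, hence independent.\<close>

lemma finite_mat_eigenvalues:
  fixes M :: "real^'n^'n"
  assumes sym: "symmetric_mat M"
  shows "finite (mat_eigenvalues M)"
proof -
  let ?E = "mat_eigenvalues M"
  define ev where "ev l = (SOME v. v \<noteq> 0 \<and> M *v v = l *\<^sub>R v)" for l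
  have ev: "ev l \<noteq> 0 \<and> M *v ev l = l *\<^sub>R ev l" if "l \<in> ?E" for l
    using that someI_ex[of "\<lambda>v. v \<noteq> 0 \<and> M *v v = l *\<^sub>R v"]
    unfolding mat_eigenvalues_def ev_def by blast
  have orth: "ev l \<bullet> ev l' = 0" if "l \<in> ?E" "l' \<in> ?E" "l \<noteq> l'" for l l'
  proof -
    have "l' * (ev l \<bullet> ev l') = ev l \<bullet> (M *v ev l')" using ev[OF that(2)] by simp
    also have "\<dots> = (M *v ev l) \<bullet> ev l'" by (rule symmetric_mat_inner[OF sym])
    also have "\<dots> = l * (ev l \<bullet> ev l')" using ev[OF that(1)] by simp
    finally show ?thesis using that(3) by simp
  qed
  have "inj_on ev ?E"
  proof (rule inj_onI)
    fix l l' assume "l \<in> ?E" "l' \<in> ?E" "ev l = ev l'"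
    then show "l = l'" using orth[of l l'] ev[of l] by auto
  qed
  moreover have "independent (ev ` ?E)"
    by (rule pairwise_orthogonal_independent)
       (auto simp: pairwise_def orthogonal_def intro!: orth dest: ev)
  then have "finite (ev ` ?E)" by (rule finiteI_independent)
  ultimately show ?thesis using finite_imageD by blast
qed

lemma symmetric_mat_form_le_lambda_max:
  fixes M :: "real^'n^'n"
  assumes sym: "symmetric_mat M"
  shows "v \<bullet> (M *v v) \<le> lambda_max M * (norm v)\<^sup>2"
proof -
  obtain \<mu> u where "u \<noteq> 0" "M *v u = \<mu> *\<^sub>R u"
    and form_le: "\<And>v. v \<bullet> (M *v v) \<le> \<mu> * (norm v)\<^sup>2"
    using self_adjoint_max_eigenvector[OF matrix_vector_mul_linear symmetric_mat_inner[OF sym]]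
    by blast
  then have "\<mu> \<in> mat_eigenvalues M" unfolding mat_eigenvalues_def by blast
  then have "\<mu> \<le> lambda_max M"
    unfolding lambda_max_def using finite_mat_eigenvalues[OF sym] by simp
  then have "\<mu> * (norm v)\<^sup>2 \<le> lambda_max M * (norm v)\<^sup>2" by (simp add: mult_right_mono)
  with form_le[of v] show ?thesis by linarith
qed

lemma symmetric_mat_lambda_min_le_form:
  fixes M :: "real^'n^'n"
  assumes sym: "symmetric_mat M"
  shows "lambda_min M * (norm v)\<^sup>2 \<le> v \<bullet> (M *v v)"
proof -
  have "linear (\<lambda>v. - (M *v v))" by (intro linear_compose_neg matrix_vector_mul_linear)
  moreover have "\<And>u v. u \<bullet> - (M *v v) = - (M *v u) \<bullet> v"
    by (simp add: symmetric_mat_inner[OF sym])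
  ultimately obtain \<nu> w where "w \<noteq> 0" "- (M *v w) = \<nu> *\<^sub>R w"
    and form_le: "\<And>v. v \<bullet> - (M *v v) \<le> \<nu> * (norm v)\<^sup>2"
    by (rule self_adjoint_max_eigenvector) blast
  then have "M *v w = (-\<nu>) *\<^sub>R w" by (metis minus_minus scaleR_minus_left)
  then have "-\<nu> \<in> mat_eigenvalues M" using \<open>w \<noteq> 0\<close> unfolding mat_eigenvalues_def by blast
  then have "lambda_min M \<le> -\<nu>"
    unfolding lambda_min_def using finite_mat_eigenvalues[OF sym] by simp
  then have "lambda_min M * (norm v)\<^sup>2 \<le> -\<nu> * (norm v)\<^sup>2"
    by (rule mult_right_mono) simp
  with form_le[of v] show ?thesis by simp
qed

lemma symmetric_mat_psd_lambda_max_nonneg: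
  fixes M :: "real^'n^'n"
  assumes sym: "symmetric_mat M" and psd: "\<And>v. 0 \<le> v \<bullet> (M *v v)"
  shows "0 \<le> lambda_max M"
proof -
  obtain b :: "real^'n" where "b \<in> Basis" using nonempty_Basis by blast
  then have "norm b = 1" by simp
  then show ?thesis using psd[of b] symmetric_mat_form_le_lambda_max[OF sym, of b] by simp
qed

lemma symmetric_mat_psd_norm_le:
  fixes M :: "real^'n^'n"
  assumes sym: "symmetric_mat M" and psd: "\<And>v. 0 \<le> v \<bullet> (M *v v)"
  shows "(norm (M *v v))\<^sup>2 \<le> lambda_max M * (v \<bullet> (M *v v))"
    and "norm (M *v v) \<le> lambda_max M * norm v"
  using self_adjoint_norm_le[OF matrix_vector_mul_linear symmetric_mat_inner[OF sym] psd
      symmetric_mat_form_le_lambda_max[OF sym] symmetric_mat_psd_lambda_max_nonneg[OF sym psd]] .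

lemma pos_def_mat_form_nonneg: "pos_def_mat M \<Longrightarrow> 0 \<le> v \<bullet> (M *v v)"
  unfolding pos_def_mat_def by (cases "v = 0") (auto intro: less_imp_le)

lemma locally_lipschitz_imp_local_lipschitz:
  fixes g :: "'a::metric_space \<Rightarrow> 'b::metric_space" and T :: "'c::metric_space set"
  assumes "locally_lipschitz g"
  shows "local_lipschitz T S (\<lambda>_. g)"
proof (rule local_lipschitzI)
  fix t x
  obtain e L where "e > 0" and lip: "L-lipschitz_on (ball x e) g"
    using assms unfolding locally_lipschitz_def by blast
  have "L-lipschitz_on (cball x (e/2) \<inter> S) g"
    by (rule lipschitz_on_subset[OF lip]) (use \<open>e > 0\<close> in auto)
  then show "\<exists>u>0. \<exists>L. \<forall>t\<in>cball t u \<inter> T. L-lipschitz_on (cball x u \<inter> S) g"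
    using \<open>e > 0\<close> by (intro exI[of _ "e/2"]) auto
qed

lemma locally_lipschitz_imp_continuous_on:
  fixes g :: "'a::metric_space \<Rightarrow> 'b::metric_space"
  assumes "locally_lipschitz g"
  shows "continuous_on S g"
  using local_lipschitz_continuous_on[OF locally_lipschitz_imp_local_lipschitz[OF assms],
      where T = "{0::real}"]
  by blast

lemma locally_lipschitz_lipschitz_on_compact:
  fixes g :: "'a::metric_space \<Rightarrow> 'b::metric_space"
  assumes "locally_lipschitz g" and "compact S"
  obtains L where "L-lipschitz_on S g"
  using local_lipschitz_compact_implies_lipschitz[OF
      locally_lipschitz_imp_local_lipschitz[OF assms(1)] assms(2) compact_sing[of "0::real"]]
  by auto

text \<open>Proved by the mean value theorem, hence the constant \<open>L\<close> rather than the sharp \<open>L/2\<close>.\<close>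

lemma lipschitz_gradient_upper_bound:
  fixes F :: "'a::real_inner \<Rightarrow> real"
  assumes grad: "\<And>z. z \<in> closed_segment y w \<Longrightarrow> (F has_derivative (\<lambda>h. G z \<bullet> h)) (at z)"
    and lip: "L-lipschitz_on (closed_segment y w) G"
  shows "F w \<le> F y + G y \<bullet> (w - y) + L * (norm (w - y))\<^sup>2"
proof -
  define d where "d = w - y"
  have seg: "y + t *\<^sub>R d \<in> closed_segment y w" if "t \<in> {0..1}" for t
    using that unfolding d_def in_segment
    by (intro exI[of _ t]) (auto simp: algebra_simps)
  have "((\<lambda>t. F (y + t *\<^sub>R d)) has_derivative (\<lambda>s. G (y + t *\<^sub>R d) \<bullet> (s *\<^sub>R d)))
      (at t within {0..1})" if "0 \<le> t" "t \<le> 1" for t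
  proof -
    have "((\<lambda>t. y + t *\<^sub>R d) has_derivative (\<lambda>s. s *\<^sub>R d)) (at t within {0..1})"
      by (auto intro!: derivative_eq_intros)
    from has_derivative_compose[OF this grad[OF seg]] show ?thesis
      using that by (simp add: o_def)
  qed
  from mvt_very_simple[OF _ this] obtain t where t: "t \<in> {0..1}"
    and mvt: "F w - F y = G (y + t *\<^sub>R d) \<bullet> d"
    unfolding d_def by auto
  have "(G (y + t *\<^sub>R d) - G y) \<bullet> d \<le> norm (G (y + t *\<^sub>R d) - G y) * norm d"
    by (rule norm_cauchy_schwarz)
  also have "\<dots> \<le> L * norm (t *\<^sub>R d) * norm d"
    using lipschitz_on_normD[OF lip seg[OF t] ends_in_segment(1)] by (simp add: mult_right_mono)
  also have "\<dots> \<le> L * norm d * norm d"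
    using t lipschitz_on_nonneg[OF lip]
    by (intro mult_right_mono mult_left_mono) (auto simp: mult_left_le_one_le)
  finally show ?thesis
    using mvt unfolding d_def by (simp add: inner_diff_left power2_eq_square algebra_simps)
qed

lemma gradient_step_decrease:
  fixes F :: "real^'n \<Rightarrow> real" and M :: "real^'n^'n"
  assumes grad: "\<And>z. z \<in> closed_segment y (y - M *v G y) \<Longrightarrow>
      (F has_derivative (\<lambda>h. G z \<bullet> h)) (at z)"
    and lip: "L-lipschitz_on (closed_segment y (y - M *v G y)) G"
    and sym: "symmetric_mat M" and psd: "\<And>v. 0 \<le> v \<bullet> (M *v v)"
    and small: "L * lambda_max M \<le> 1/2"
  shows "F (y - M *v G y) \<le> F y - 1/2 * lambda_min M * (norm (G y))\<^sup>2"
proof -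
  let ?g = "G y"
  have "F (y - M *v ?g) \<le> F y - ?g \<bullet> (M *v ?g) + L * (norm (M *v ?g))\<^sup>2"
    using lipschitz_gradient_upper_bound[OF grad lip] by simp
  also have "L * (norm (M *v ?g))\<^sup>2 \<le> (L * lambda_max M) * (?g \<bullet> (M *v ?g))"
    using symmetric_mat_psd_norm_le(1)[OF sym psd] lipschitz_on_nonneg[OF lip]
    by (simp add: mult_left_mono mult.assoc)
  also have "\<dots> \<le> 1/2 * (?g \<bullet> (M *v ?g))"
    using small psd by (rule mult_right_mono)
  also have "F y - ?g \<bullet> (M *v ?g) + 1/2 * (?g \<bullet> (M *v ?g)) = F y - 1/2 * (?g \<bullet> (M *v ?g))"
    by simp
  also have "\<dots> \<le> F y - 1/2 * lambda_min M * (norm ?g)\<^sup>2"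
    using symmetric_mat_lambda_min_le_form[OF sym, of ?g] by simp
  finally show ?thesis by simp
qed

lemma eventually_gradient_step_decrease:
  fixes F :: "real^'n \<Rightarrow> real" and M :: "nat \<Rightarrow> real^'n^'n"
  assumes grad: "\<And>y. (F has_derivative (\<lambda>h. G y \<bullet> h)) (at y)"
    and lip: "locally_lipschitz G"
    and sym: "\<And>k. symmetric_mat (M k)" and psd: "\<And>k v. 0 \<le> v \<bullet> (M k *v v)"
    and lim: "(\<lambda>k. lambda_max (M k)) \<longlonglongrightarrow> 0"
  shows "\<forall>\<^sub>F k in sequentially. \<forall>y. norm y \<le> R \<longrightarrow>
    F (y - M k *v G y) \<le> F y - 1/2 * lambda_min (M k) * (norm (G y))\<^sup>2"
proof -
  have "compact (G ` cball 0 R)"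
    by (intro compact_continuous_image locally_lipschitz_imp_continuous_on[OF lip] compact_cball)
  then obtain B where "B > 0" and B: "\<And>y. norm y \<le> R \<Longrightarrow> norm (G y) \<le> B"
    by (metis bounded_pos compact_imp_bounded image_eqI mem_cball_0)
  obtain L0 where L0: "L0-lipschitz_on (cball 0 (R + 1)) G"
    using locally_lipschitz_lipschitz_on_compact[OF lip compact_cball] .
  define L where "L = max L0 1"
  have lip_L: "L-lipschitz_on (cball 0 (R + 1)) G"
    using L0 unfolding L_def by (rule lipschitz_on_mono) auto
  have "\<forall>\<^sub>F k in sequentially. lambda_max (M k) < min (1 / (2 * L)) (1 / B)"
    using lim by (rule order_tendstoD) (simp add: \<open>B > 0\<close> L_def)
  then show ?thesis
  proof (rule eventually_mono, intro allI impI)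
    fix k and y :: "real^'n"
    assume small: "lambda_max (M k) < min (1 / (2 * L)) (1 / B)" and y: "norm y \<le> R"
    have "norm (M k *v G y) \<le> lambda_max (M k) * norm (G y)"
      by (rule symmetric_mat_psd_norm_le(2)[OF sym psd])
    also have "\<dots> \<le> 1 / B * B"
      using small B[OF y] symmetric_mat_psd_lambda_max_nonneg[OF sym psd] \<open>B > 0\<close>
      by (intro mult_mono) auto
    finally have "norm (M k *v G y) \<le> 1" using \<open>B > 0\<close> by simp
    then have "closed_segment y (y - M k *v G y) \<subseteq> cball y 1"
      by (intro closed_segment_subset) (auto simp: dist_norm)
    also have "\<dots> \<subseteq> cball 0 (R + 1)"
      using y by (simp add: cball_subset_cball_iff dist_norm)
    finally have "L-lipschitz_on (closed_segment y (y - M k *v G y)) G"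
      using lip_L by (rule lipschitz_on_subset[rotated])
    moreover have "L * lambda_max (M k) \<le> 1/2"
      using small by (simp add: L_def field_simps)
    ultimately show "F (y - M k *v G y) \<le> F y - 1/2 * lambda_min (M k) * (norm (G y))\<^sup>2"
      using grad sym psd by (intro gradient_step_decrease)
  qed
qed

lemma chi0_Suc_weighted_le:
  assumes "0 \<le> u" and "(\<forall>j\<le>k. norm (x j) \<le> R) \<Longrightarrow> u \<le> v"
  shows "u * chi0 x (Suc k) R \<le> v * chi0 x k R"
  using assms by (auto simp: chi0_def le_Suc_eq)

theorem corollary3p2:
  fixes F :: "real^'p \<Rightarrow> real" and gradF :: "real^'p \<Rightarrow> real^'p"
    and Flb R :: real and x0 :: "real^'p"
    and M :: "nat \<Rightarrow> real^'p^'p" and x :: "nat \<Rightarrow> real^'p"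
  assumes lb: "\<forall>y. Flb \<le> F y"
    and grad: "\<forall>y. (F has_derivative (\<lambda>h. gradF y \<bullet> h)) (at y)"
    and lip: "locally_lipschitz gradF"
    and sym: "\<forall>k. symmetric_mat (M k)"
    and pd: "\<forall>k. pos_def_mat (M k)"
    and lim: "(\<lambda>k. lambda_max (M k)) \<longlonglongrightarrow> 0"
    and x_0: "x 0 = x0"
    and x_step: "\<forall>k. x (Suc k) = x k - M k *v gradF (x k)"
    and R: "R \<ge> 0"
  shows "\<exists>K::nat. \<forall>k\<ge>K.
    (F (x (Suc k)) - Flb) * chi0 x (Suc k) R
      \<le> (F (x k) - Flb - 1/2 * lambda_min (M k) * (norm (gradF (x k)))\<^sup>2) * chi0 x k R"
proof -
  have psd: "\<And>k v. 0 \<le> v \<bullet> (M k *v v)" using pd pos_def_mat_form_nonneg by blast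
  obtain K where K: "\<And>k y. K \<le> k \<Longrightarrow> norm y \<le> R \<Longrightarrow>
      F (y - M k *v gradF y) \<le> F y - 1/2 * lambda_min (M k) * (norm (gradF y))\<^sup>2"
    using eventually_gradient_step_decrease[of F gradF M R] grad lip sym psd lim
    unfolding eventually_sequentially by blast
  have "(F (x (Suc k)) - Flb) * chi0 x (Suc k) R
      \<le> (F (x k) - Flb - 1/2 * lambda_min (M k) * (norm (gradF (x k)))\<^sup>2) * chi0 x k R"
    if "K \<le> k" for k
  proof (rule chi0_Suc_weighted_le)
    show "0 \<le> F (x (Suc k)) - Flb" using lb by simp
    assume "\<forall>j\<le>k. norm (x j) \<le> R"
    then show "F (x (Suc k)) - Flb \<le> F (x k) - Flb - 1/2 * lambda_min (M k) * (norm (gradF (x k)))\<^sup>2"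
      using K[OF that, of "x k"] x_step by simp
  qed
  then show ?thesis by blast
qed

end
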